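(* Assume $\operatorname{add}(\mathcal N)=\operatorname{cov}(\mathcal N)$. Then $\mathcal{ANM}_{\operatorname{add}(\mathcal N)}\setminus\mathcal{ND}_{\operatorname{add}(\mathcal N)}$ is $2^{\mathfrak c}$-coneable in $\left(\mathbb R^{[0,1]}\right)^{\operatorname{add}(\mathcal N)}$.
   Context: For a regular infinite cardinal $\kappa$, a $\kappa$-sequence $(x_\alpha)_{\alpha<\kappa}$ converges to $x$ if for every neighbourhood $U$ of $x$ there is $\alpha_0<\kappa$ with $x_\alpha\in U$ for all $\alpha_0<\alpha<\kappa$; $\left(\mathbb R^{[0,1]}\right)^{\kappa}$ is the real vector space of $\kappa$-sequences of functions $[0,1]\to\mathbb R$ with indexwise operations. $\lambda$ is Lebesgue measure, $\mathcal N$ the null subsets of $[0,1]$; $\operatorname{add}(\mathcal N)$ the least cardinality of a family of null sets with non-null union, $\operatorname{cov}(\mathcal N)$ the least cardinality of a family of null sets covering $[0,1]$. $\mathcal{ANM}_{\kappa}$: $\kappa$-sequences of Lebesgue measurable $f_\alpha:[0,1]\to\mathbb R$ converging a.e. to a measurable $f$ but not converging in measure to $f$. $\mathcal{ND}_{\kappa}$: $\kappa$-sequences of Lebesgue measurable $f_\alpha:[0,1]\to\mathbb R$ dominated a.e. by a common integrable $g$, converging a.e. to an integrable $f$, with $\int|f_\alpha-f|\,d\lambda\not\to0$. $S$ is $\mu$-coneable if there are linearly independent sets $B_+,B_-\subset S$ of cardinality $\mu$ such that all finite combinations of elements of $B_+$ with positive coefficients, and all finite combinations of elements of $B_-$ with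 negative coefficients, lie in $S$. *)

theory Defs
  imports "HOL-Analysis.Analysis"
begin

abbreviation L01 :: "real measure" where
  "L01 \<equiv> lebesgue_on {0..1}"

definition nullN :: "real set set" where
  "nullN = {A. A \<subseteq> {0..1} \<and> A \<in> null_sets lebesgue}"

text \<open>The index set I has cardinality add(N).\<close>
definition is_addN :: "'i set \<Rightarrow> bool" where
  "is_addN I \<longleftrightarrow>
     (\<exists>\<F>. \<F> \<subseteq> nullN \<and> \<Union>\<F> \<notin> nullN \<and> (card_of \<F>, card_of I) \<in> ordIso) \<and>
     (\<forall>\<F>. \<F> \<subseteq> nullN \<and> \<Union>\<F> \<notin> nullN \<longrightarrow> (card_of I, card_of \<F>) \<in> ordLeq)"

text \<open>The index set I has cardinality cov(N).\<close>
definition is_covN :: "'i set \<Rightarrow> bool" where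
  "is_covN I \<longleftrightarrow>
     (\<exists>\<F>. \<F> \<subseteq> nullN \<and> \<Union>\<F> = {0..1} \<and> (card_of \<F>, card_of I) \<in> ordIso) \<and>
     (\<forall>\<F>. \<F> \<subseteq> nullN \<and> \<Union>\<F> = {0..1} \<longrightarrow> (card_of I, card_of \<F>) \<in> ordLeq)"

definition kconv :: "'i rel \<Rightarrow> ('i \<Rightarrow> 'b::topological_space) \<Rightarrow> 'b \<Rightarrow> bool" where
  "kconv \<kappa> y l \<longleftrightarrow>
     (\<forall>U. open U \<and> l \<in> U \<longrightarrow>
        (\<exists>\<alpha>0\<in>Field \<kappa>. \<forall>\<alpha>\<in>Field \<kappa>. (\<alpha>0, \<alpha>) \<in> \<kappa> \<and> \<alpha> \<noteq> \<alpha>0 \<longrightarrow> y \<alpha> \<in> U))"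

definition kconv_ae :: "'i rel \<Rightarrow> ('i \<Rightarrow> real \<Rightarrow> real) \<Rightarrow> (real \<Rightarrow> real) \<Rightarrow> bool" where
  "kconv_ae \<kappa> F f \<longleftrightarrow> (AE x in L01. kconv \<kappa> (\<lambda>\<alpha>. F \<alpha> x) (f x))"

definition kconv_meas :: "'i rel \<Rightarrow> ('i \<Rightarrow> real \<Rightarrow> real) \<Rightarrow> (real \<Rightarrow> real) \<Rightarrow> bool" where
  "kconv_meas \<kappa> F f \<longleftrightarrow>
     (\<forall>\<epsilon>>0. kconv \<kappa> (\<lambda>\<alpha>. measure L01 {x \<in> space L01. \<epsilon> \<le> \<bar>F \<alpha> x - f x\<bar>}) 0)"

definition ANM :: "'i rel \<Rightarrow> ('i \<Rightarrow> real \<Rightarrow> real) set" where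
  "ANM \<kappa> = {F. (\<forall>\<alpha>\<in>Field \<kappa>. F \<alpha> \<in> borel_measurable L01) \<and>
                 (\<exists>f \<in> borel_measurable L01. kconv_ae \<kappa> F f \<and> \<not> kconv_meas \<kappa> F f)}"

definition ND :: "'i rel \<Rightarrow> ('i \<Rightarrow> real \<Rightarrow> real) set" where
  "ND \<kappa> = {F. (\<forall>\<alpha>\<in>Field \<kappa>. F \<alpha> \<in> borel_measurable L01) \<and>
                (\<exists>g. integrable L01 g \<and> (\<forall>\<alpha>\<in>Field \<kappa>. AE x in L01. \<bar>F \<alpha> x\<bar> \<le> g x)) \<and>
                (\<exists>f. integrable L01 f \<and> kconv_ae \<kappa> F f \<and>
                     \<not> kconv \<kappa> (\<lambda>\<alpha>. LINT x|L01. \<bar>F \<alpha> x - f x\<bar>) 0)}"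

text \<open>The vector space (R^[0,1])^kappa, realised as extensional functions
  (zero outside Field kappa and outside [0,1]).\<close>
definition seq_space :: "'i rel \<Rightarrow> ('i \<Rightarrow> real \<Rightarrow> real) set" where
  "seq_space \<kappa> = {F. \<forall>\<alpha> x. (\<alpha> \<notin> Field \<kappa> \<or> x \<notin> {0..1}) \<longrightarrow> F \<alpha> x = 0}"

definition lincomb :: "(('i \<Rightarrow> real \<Rightarrow> real) \<Rightarrow> real) \<Rightarrow> ('i \<Rightarrow> real \<Rightarrow> real) set
                        \<Rightarrow> ('i \<Rightarrow> real \<Rightarrow> real)" where
  "lincomb c A = (\<lambda>\<alpha> x. \<Sum>b\<in>A. c b * b \<alpha> x)"

definition lin_indep :: "('i \<Rightarrow> real \<Rightarrow> real) set \<Rightarrow> bool" where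
  "lin_indep B \<longleftrightarrow> (\<forall>A c. finite A \<and> A \<subseteq> B \<and> lincomb c A = (\<lambda>\<alpha> x. 0) \<longrightarrow> (\<forall>b\<in>A. c b = 0))"

text \<open>mu-coneability of S in the space seq_space kappa, mu given by a set of that cardinality.\<close>
definition coneable :: "'c set \<Rightarrow> 'i rel \<Rightarrow> ('i \<Rightarrow> real \<Rightarrow> real) set \<Rightarrow> bool" where
  "coneable M \<kappa> S \<longleftrightarrow>
     (\<exists>Bp Bm. Bp \<subseteq> seq_space \<kappa> \<and> Bm \<subseteq> seq_space \<kappa> \<and>
        lin_indep Bp \<and> lin_indep Bm \<and>
        (card_of Bp, card_of M) \<in> ordIso \<and> (card_of Bm, card_of M) \<in> ordIso \<and>
        (\<forall>A c. finite A \<and> A \<noteq> {} \<and> A \<subseteq> Bp \<and> (\<forall>b\<in>A. c b > 0) \<longrightarrow> lincomb c A \<in> S) \<and>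
        (\<forall>A c. finite A \<and> A \<noteq> {} \<and> A \<subseteq> Bm \<and> (\<forall>b\<in>A. c b < 0) \<longrightarrow> lincomb c A \<in> S))"

end

theory Submission
  imports Defs
begin

text \<open>Since add(N) = cov(N) = \<kappa>, the interval [0,1] is the union of null sets \<open>g \<alpha>\<close>
  (\<open>\<alpha> < \<kappa>\<close>) such that every initial union \<open>\<Union>\<beta><\<alpha>. g \<beta>\<close> is still null. Fix a null set
  \<open>C\<close> and let \<open>good \<alpha>\<close> be \<open>(0,1]\<close> minus \<open>C\<close> and minus that initial union. The \<kappa>-sequence
  whose \<open>\<alpha>\<close>-th term is \<open>1/x\<close> on \<open>good \<alpha>\<close> converges to 0 at every \<open>x \<notin> C\<close>, because \<open>x\<close>
  lies in some \<open>g \<beta>\<close> and hence outside \<open>good \<alpha>\<close> for all \<open>\<alpha> > \<beta>\<close>. Yet every \<open>good \<alpha>\<close>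
  has full measure, so a positive combination of such sequences is at least \<open>D/x\<close> almost
  everywhere in each term: it neither converges in measure nor has an integrable dominant.
  To get \<open>2^c\<close> linearly independent such sequences, add to the one for \<open>S \<subseteq> \<real>\<close> the
  indicator of a set \<open>P S \<subseteq> C\<close>, where \<open>C\<close> is the Cantor set and the \<open>P S\<close> are chosen
  so that each one has a point outside any finitely many others. Negating gives the
  negative cone.\<close>

section \<open>Null filtrations from add(N) = cov(N)\<close>

lemma infinite_if_is_addN:
  assumes "is_addN I"
  shows "infinite I"
proof
  assume "finite I"
  from assms obtain \<F> where \<F>: "\<F> \<subseteq> nullN" "\<Union>\<F> \<notin> nullN" "(card_of \<F>, card_of I) \<in> ordIso"
    unfolding is_addN_def by blast
  then have "countable \<F>"
    using \<open>finite I\<close> card_of_ordIso_finite countable_finite by blast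
  then have "\<Union>\<F> \<in> null_sets lebesgue"
    using null_sets_UN'[of \<F> "\<lambda>A. A" lebesgue] \<F>(1) by (auto simp: nullN_def)
  with \<F> show False
    by (auto simp: nullN_def)
qed

lemma Union_nullN_if_card_less_addN:
  assumes "is_addN I" "\<F> \<subseteq> nullN" "(card_of \<F>, card_of I) \<in> ordLess"
  shows "\<Union>\<F> \<in> nullN"
  using assms not_ordLess_ordLeq unfolding is_addN_def by blast

locale null_filtration =
  fixes \<kappa> :: "'i rel" and g :: "'i \<Rightarrow> real set"
  assumes Field_nonempty: "Field \<kappa> \<noteq> {}"
    and no_maximum: "\<And>\<alpha>. \<alpha> \<in> Field \<kappa> \<Longrightarrow> \<exists>\<beta>\<in>Field \<kappa>. \<alpha> \<noteq> \<beta> \<and> (\<alpha>, \<beta>) \<in> \<kappa>"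
    and covers_unit_interval: "\<Union>(g ` Field \<kappa>) = {0..1}"
    and initial_Union_nullN: "\<And>\<alpha>. \<alpha> \<in> Field \<kappa> \<Longrightarrow> \<Union>(g ` underS \<kappa> \<alpha>) \<in> nullN"

lemma null_filtration_if_addN_eq_covN:
  fixes \<kappa> :: "'i rel"
  assumes \<kappa>: "card_order_on (Field \<kappa>) \<kappa>"
    and add: "is_addN (Field \<kappa>)" and cov: "is_covN (Field \<kappa>)"
  obtains g where "null_filtration \<kappa> g"
proof -
  from cov obtain \<F> where \<F>: "\<F> \<subseteq> nullN" "\<Union>\<F> = {0..1}" "(card_of \<F>, card_of (Field \<kappa>)) \<in> ordIso"
    unfolding is_covN_def by blast
  then obtain g where g: "bij_betw g (Field \<kappa>) \<F>"
    using card_of_ordIso ordIso_symmetric by blast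
  have inf: "infinite (Field \<kappa>)"
    using add by (rule infinite_if_is_addN)
  have "\<Union>(g ` underS \<kappa> \<alpha>) \<in> nullN" if "\<alpha> \<in> Field \<kappa>" for \<alpha>
  proof (rule Union_nullN_if_card_less_addN[OF add])
    have "underS \<kappa> \<alpha> \<subseteq> Field \<kappa>"
      by (auto simp: underS_def Field_def)
    then show "g ` underS \<kappa> \<alpha> \<subseteq> nullN"
      using g \<F>(1) by (auto simp: bij_betw_def)
    have "(card_of (g ` underS \<kappa> \<alpha>), card_of (underS \<kappa> \<alpha>)) \<in> ordLeq"
      by (rule card_of_image)
    also have "(card_of (underS \<kappa> \<alpha>), \<kappa>) \<in> ordLess"
      using \<kappa> that by (rule card_of_underS)
    also have "(\<kappa>, card_of (Field \<kappa>)) \<in> ordIso"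
      using \<kappa> card_of_Field_ordIso ordIso_symmetric by blast
    finally show "(card_of (g ` underS \<kappa> \<alpha>), card_of (Field \<kappa>)) \<in> ordLess" .
  qed
  then have "null_filtration \<kappa> g"
    using inf g \<F>(2) infinite_Card_order_limit[OF \<kappa> inf]
    by unfold_locales (auto simp: bij_betw_def)
  then show thesis ..
qed

section \<open>The Cantor set\<close>

definition cantor_digit :: "nat set \<Rightarrow> nat \<Rightarrow> real" where
  "cantor_digit A i = (if i \<in> A then (1/3) ^ Suc i else 0)"

definition cantor_code :: "nat set \<Rightarrow> real" where
  "cantor_code A = (\<Sum>i. cantor_digit A i)"

lemma summable_cantor_digit_shift: "summable (\<lambda>i. cantor_digit A (i + n))"
  by (rule summable_comparison_test[of _ "\<lambda>i. (1/3) ^ Suc n * (1/3) ^ i"])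
     (auto simp: cantor_digit_def power_add intro!: summable_mult summable_geometric)

lemma cantor_tail_bounds:
  "0 \<le> (\<Sum>i. cantor_digit A (i + n))" "(\<Sum>i. cantor_digit A (i + n)) \<le> (1/3) ^ n / 2"
proof -
  show "0 \<le> (\<Sum>i. cantor_digit A (i + n))"
    by (intro suminf_nonneg summable_cantor_digit_shift) (simp add: cantor_digit_def)
  have "(\<Sum>i. cantor_digit A (i + n)) \<le> (\<Sum>i. (1/3) ^ Suc n * (1/3::real) ^ i)"
    by (intro suminf_le summable_cantor_digit_shift summable_mult summable_geometric)
       (auto simp: cantor_digit_def power_add)
  also have "\<dots> = (1/3) ^ n / 2"
    by (subst suminf_mult[OF summable_geometric]) (auto simp: suminf_geometric)
  finally show "(\<Sum>i. cantor_digit A (i + n)) \<le> (1/3) ^ n / 2" .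
qed

lemma cantor_code_split:
  "cantor_code A = (\<Sum>i. cantor_digit A (i + n)) + (\<Sum>i<n. cantor_digit A i)"
  unfolding cantor_code_def
  using suminf_split_initial_segment summable_cantor_digit_shift[of A 0] by simp

lemma cantor_code_less:
  assumes "k \<in> A" "k \<notin> B" "\<And>i. i < k \<Longrightarrow> i \<in> A \<longleftrightarrow> i \<in> B"
  shows "cantor_code B < cantor_code A"
proof -
  have "(\<Sum>i<k. cantor_digit A i) = (\<Sum>i<k. cantor_digit B i)"
    by (intro sum.cong) (auto simp: cantor_digit_def assms(3))
  moreover have "cantor_code A = (\<Sum>i. cantor_digit A (i + Suc k)) + (\<Sum>i<k. cantor_digit A i) + (1/3) ^ Suc k"
    using cantor_code_split[of A "Suc k"] assms(1) by (simp add: cantor_digit_def)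
  moreover have "cantor_code B = (\<Sum>i. cantor_digit B (i + Suc k)) + (\<Sum>i<k. cantor_digit B i)"
    using cantor_code_split[of B "Suc k"] assms(2) by (simp add: cantor_digit_def)
  moreover have "(1/3) ^ Suc k / 2 < (1/3::real) ^ Suc k"
    by simp
  ultimately show ?thesis
    using cantor_tail_bounds[of A "Suc k"] cantor_tail_bounds[of B "Suc k"] by linarith
qed

lemma inj_cantor_code: "inj cantor_code"
proof (rule injI, rule ccontr)
  fix A B assume eq: "cantor_code A = cantor_code B" and "A \<noteq> B"
  then have "\<exists>k. k \<in> A \<longleftrightarrow> k \<notin> B" by blast
  define k where "k = (LEAST k. k \<in> A \<longleftrightarrow> k \<notin> B)"
  have k: "k \<in> A \<longleftrightarrow> k \<notin> B"
    unfolding k_def by (rule LeastI_ex) fact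
  have "\<And>i. i < k \<Longrightarrow> i \<in> A \<longleftrightarrow> i \<in> B"
    unfolding k_def using not_less_Least by blast
  with k cantor_code_less[of k A B] cantor_code_less[of k B A] eq show False
    by (cases "k \<in> A") auto
qed

lemma cantor_code_in_unit_interval: "cantor_code A \<in> {0..1}"
  using cantor_tail_bounds[of A 0] cantor_code_split[of A 0] by simp

text \<open>The codes agreeing with a given set below \<open>n\<close> lie in one interval of length \<open>3^-n/2\<close>,
  so the range is covered by \<open>2^n\<close> such intervals.\<close>

lemma cantor_code_range_null: "range cantor_code \<in> null_sets lebesgue"
proof -
  define U where "U n = (\<Union>T\<in>Pow {..<n}. {sum (\<lambda>i. (1/3) ^ Suc i) T .. sum (\<lambda>i. (1/3) ^ Suc i) T + (1/3::real) ^ n / 2})" for n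
  have range_U: "range cantor_code \<subseteq> U n" for n
  proof clarify
    fix A
    have "(\<Sum>i<n. cantor_digit A i) = sum (\<lambda>i. (1/3) ^ Suc i) (A \<inter> {..<n})"
      by (simp add: cantor_digit_def sum.If_cases Int_commute)
    then show "cantor_code A \<in> U n"
      using cantor_code_split[of A n] cantor_tail_bounds[of A n]
      unfolding U_def by (intro UN_I[of "A \<inter> {..<n}"]) auto
  qed
  have U_measure: "measure lebesgue (U n) \<le> (2/3) ^ n / 2" for n
  proof -
    have "measure lebesgue (U n) \<le> (\<Sum>T\<in>Pow {..<n}. (1/3::real) ^ n / 2)"
      unfolding U_def by (rule order_trans[OF measure_UNION_le]) auto
    also have "\<dots> = (2/3) ^ n / 2"
      by (simp add: card_Pow power_divide)
    finally show ?thesis .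
  qed
  have "negligible (range cantor_code)"
    unfolding negligible_outer_le
  proof (intro allI impI)
    fix e :: real assume "e > 0"
    then obtain n where n: "(2/3::real) ^ n < e"
      using real_arch_pow_inv[of e "2/3"] by auto
    have "U n \<in> lmeasurable"
      unfolding U_def by (intro lmeasurable_compact compact_UN) auto
    moreover have "measure lebesgue (U n) \<le> e"
      using U_measure[of n] n measure_nonneg[of lebesgue "U n"] by linarith
    ultimately show "\<exists>T. range cantor_code \<subseteq> T \<and> T \<in> lmeasurable \<and> measure lebesgue T \<le> e"
      using range_U by blast
  qed
  then show ?thesis
    using negligible_iff_null_sets by blast
qed

section \<open>A separating family of null sets\<close>

definition graph_seqs :: "'a set \<Rightarrow> (nat \<Rightarrow> 'a \<times> bool) set" where
  "graph_seqs S = {q. \<forall>i. snd (q i) \<longleftrightarrow> fst (q i) \<in> S}"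

lemma graph_seqs_separate:
  assumes "finite T" "j \<in> T"
  shows "\<exists>q\<in>graph_seqs j. \<forall>S\<in>T - {j}. q \<notin> graph_seqs S"
proof -
  have "\<forall>S\<in>T - {j}. \<exists>x. x \<in> j \<longleftrightarrow> x \<notin> S"
    by blast
  then obtain y where y: "\<And>S. S \<in> T - {j} \<Longrightarrow> y S \<in> j \<longleftrightarrow> y S \<notin> S"
    by metis
  define Z where "Z = (\<lambda>S. (y S, y S \<in> j)) ` T"
  define q where "q = from_nat_into Z"
  have "range q = Z"
    unfolding q_def Z_def using assms by (intro range_from_nat_into countable_finite) auto
  have "snd (q i) \<longleftrightarrow> fst (q i) \<in> j" for i
  proof -
    have "q i \<in> Z"
      using \<open>range q = Z\<close> by blast
    then obtain S where "q i = (y S, y S \<in> j)"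
      unfolding Z_def by blast
    then show ?thesis by simp
  qed
  then have "q \<in> graph_seqs j"
    unfolding graph_seqs_def by blast
  moreover have "q \<notin> graph_seqs S" if "S \<in> T - {j}" for S
  proof -
    from that have "(y S, y S \<in> j) \<in> range q"
      unfolding \<open>range q = Z\<close> Z_def by blast
    then obtain i where "q i = (y S, y S \<in> j)"
      by (metis rangeE)
    then show ?thesis
      using y[OF that] unfolding graph_seqs_def by (metis (mono_tags) fst_conv mem_Collect_eq snd_conv)
  qed
  ultimately show ?thesis by blast
qed

definition seq_code :: "('a \<Rightarrow> nat set) \<Rightarrow> (nat \<Rightarrow> 'a \<times> bool) \<Rightarrow> nat set" where
  "seq_code c q = {prod_encode (i, Suc m) | i m. m \<in> c (fst (q i))} \<union> {prod_encode (i, 0) | i. snd (q i)}"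

lemma mem_seq_code:
  "prod_encode (i, Suc m) \<in> seq_code c q \<longleftrightarrow> m \<in> c (fst (q i))"
  "prod_encode (i, 0) \<in> seq_code c q \<longleftrightarrow> snd (q i)"
  by (auto simp: seq_code_def prod_encode_eq)

lemma inj_seq_code:
  assumes "inj c"
  shows "inj (seq_code c)"
proof (rule injI)
  fix q q' assume eq: "seq_code c q = seq_code c q'"
  have "c (fst (q i)) = c (fst (q' i))" "snd (q i) = snd (q' i)" for i
    using mem_seq_code(1)[of i _ c q] mem_seq_code(1)[of i _ c q'] mem_seq_code(2)[of i c q] mem_seq_code(2)[of i c q']
    unfolding eq by blast+
  then show "q = q'"
    using assms by (auto simp: inj_eq intro!: prod_eqI)
qed

locale separating_null_family =
  fixes C :: "real set" and P :: "'a \<Rightarrow> real set"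
  assumes C_unit_interval: "C \<subseteq> {0..1}"
    and C_null: "C \<in> null_sets lebesgue"
    and P_subset: "\<And>S. P S \<subseteq> C"
    and P_separate: "\<And>T j. finite T \<Longrightarrow> j \<in> T \<Longrightarrow> \<exists>x\<in>P j. \<forall>S\<in>T - {j}. x \<notin> P S"

lemma exists_separating_null_family: "\<exists>C (P :: real set \<Rightarrow> real set). separating_null_family C P"
proof -
  obtain c :: "real \<Rightarrow> nat set" where c: "bij c"
    using nat_sets_eqpoll_reals eqpoll_sym unfolding eqpoll_def by blast
  define e where "e = cantor_code \<circ> seq_code c"
  have "inj e"
    unfolding e_def using inj_cantor_code inj_seq_code c bij_is_inj by (blast intro: inj_compose)
  then have "\<exists>x\<in>e ` graph_seqs j. \<forall>S\<in>T - {j}. x \<notin> e ` graph_seqs S"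
    if "finite T" "j \<in> T" for T j
    using graph_seqs_separate[OF that] by (simp add: inj_image_mem_iff)
  then have "separating_null_family (range cantor_code) (\<lambda>S. e ` graph_seqs S)"
    using cantor_code_in_unit_interval cantor_code_range_null
    by unfold_locales (auto simp: e_def)
  then show ?thesis by blast
qed

section \<open>Convergence along \<kappa>, in measure, and domination\<close>

lemma kconv_if_eventually_eq:
  assumes "\<beta> \<in> Field \<kappa>" "\<And>\<alpha>. \<alpha> \<in> Field \<kappa> \<Longrightarrow> (\<beta>, \<alpha>) \<in> \<kappa> \<Longrightarrow> \<alpha> \<noteq> \<beta> \<Longrightarrow> y \<alpha> = l"
  shows "kconv \<kappa> y l"
  using assms unfolding kconv_def by metis

lemma kconv_frequently:
  assumes "kconv \<kappa> y l" "open U" "l \<in> U"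
    and "\<And>\<alpha>. \<alpha> \<in> Field \<kappa> \<Longrightarrow> \<exists>\<beta>\<in>Field \<kappa>. \<alpha> \<noteq> \<beta> \<and> (\<alpha>, \<beta>) \<in> \<kappa>"
  obtains \<alpha> where "\<alpha> \<in> Field \<kappa>" "y \<alpha> \<in> U"
  using assms unfolding kconv_def by metis

lemma AE_L01_pos: "AE x in L01. 0 < x"
proof -
  have "{0} \<in> null_sets L01"
    by (auto simp: null_sets_restrict_space)
  then show ?thesis
    by (rule AE_I') (auto simp: less_le)
qed

lemma not_kconv_meas_if_inverse_le:
  assumes no_max: "\<And>\<alpha>. \<alpha> \<in> Field \<kappa> \<Longrightarrow> \<exists>\<beta>\<in>Field \<kappa>. \<alpha> \<noteq> \<beta> \<and> (\<alpha>, \<beta>) \<in> \<kappa>"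
    and "D > 0" and meas: "\<And>\<alpha>. \<alpha> \<in> Field \<kappa> \<Longrightarrow> F \<alpha> \<in> borel_measurable L01"
    and le: "\<And>\<alpha>. \<alpha> \<in> Field \<kappa> \<Longrightarrow> AE x in L01. D / x \<le> \<bar>F \<alpha> x\<bar>"
  shows "\<not> kconv_meas \<kappa> F (\<lambda>x. 0)"
proof
  assume "kconv_meas \<kappa> F (\<lambda>x. 0)"
  then have "kconv \<kappa> (\<lambda>\<alpha>. measure L01 {x \<in> space L01. D \<le> \<bar>F \<alpha> x\<bar>}) 0"
    using \<open>D > 0\<close> unfolding kconv_meas_def by simp
  then obtain \<alpha> where \<alpha>: "\<alpha> \<in> Field \<kappa>" "measure L01 {x \<in> space L01. D \<le> \<bar>F \<alpha> x\<bar>} < 1"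
    by (rule kconv_frequently[of _ _ _ "{..<1}"]) (use no_max in auto)
  have "AE x in L01. x \<in> {x \<in> space L01. D \<le> \<bar>F \<alpha> x\<bar>} \<longleftrightarrow> x \<in> space L01"
    using le[OF \<alpha>(1)] AE_L01_pos
  proof eventually_elim
    case (elim x)
    show ?case
    proof
      assume "x \<in> space L01"
      then have "D \<le> D / x"
        using elim(2) \<open>D > 0\<close> by (auto simp: field_simps)
      with elim(1) \<open>x \<in> space L01\<close> show "x \<in> {x \<in> space L01. D \<le> \<bar>F \<alpha> x\<bar>}"
        by simp
    qed simp
  qed
  moreover have "{x \<in> space L01. D \<le> \<bar>F \<alpha> x\<bar>} \<in> sets L01"
    using meas[OF \<alpha>(1)] by measurable
  ultimately have "measure L01 {x \<in> space L01. D \<le> \<bar>F \<alpha> x\<bar>} = measure L01 (space L01)"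
    by (intro measure_eq_AE) auto
  moreover have "measure L01 (space L01) = 1"
    by (simp add: measure_restrict_space)
  ultimately show False
    using \<alpha>(2) by simp
qed

lemma has_integral_inverse:
  assumes "0 < a" "a \<le> 1"
  shows "((\<lambda>x::real. 1 / x) has_integral - ln a) {a..1}"
proof -
  have "((\<lambda>x::real. 1 / x) has_integral ln 1 - ln a) {a..1}"
  proof (rule fundamental_theorem_of_calculus)
    fix x assume "x \<in> {a..1}"
    then have "0 < x"
      using assms by simp
    then have "(ln has_real_derivative 1 / x) (at x within {a..1})"
      by (rule has_field_derivative_at_within[OF DERIV_ln_divide])
    then show "(ln has_vector_derivative 1 / x) (at x within {a..1})"
      by (simp add: has_real_derivative_iff_has_vector_derivative)
  qed fact
  then show ?thesis
    by simp
qed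

lemma not_integrable_inverse: "\<not> integrable L01 (\<lambda>x. 1 / x)"
proof
  assume "integrable L01 (\<lambda>x. 1 / x)"
  then have int: "(\<lambda>x::real. 1 / x) integrable_on {0..1}"
    by (rule integrable_on_lebesgue_on) simp
  define J where "J = integral {0..1::real} (\<lambda>x. 1 / x)"
  define a where "a = exp (- (\<bar>J\<bar> + 1))"
  have a: "0 < a" "a \<le> 1" "- ln a = \<bar>J\<bar> + 1"
    by (auto simp: a_def)
  have "- ln a = integral {a..1} (\<lambda>x::real. 1 / x)"
    using has_integral_inverse[OF a(1,2)] by (simp add: integral_unique)
  also have "\<dots> \<le> J"
    unfolding J_def
  proof (rule integral_subset_le)
    show "(\<lambda>x::real. 1 / x) integrable_on {a..1}"
      using has_integral_inverse[OF a(1,2)] by blast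
  qed (use a(1) int in auto)
  finally show False
    using a(3) by linarith
qed

lemma not_ND_if_inverse_le:
  assumes "\<alpha> \<in> Field \<kappa>" "D > 0" and le: "AE x in L01. D / x \<le> \<bar>F \<alpha> x\<bar>"
  shows "F \<notin> ND \<kappa>"
proof
  assume "F \<in> ND \<kappa>"
  then obtain h where h: "integrable L01 h" "AE x in L01. \<bar>F \<alpha> x\<bar> \<le> h x"
    using assms(1) unfolding ND_def by blast
  have meas: "(\<lambda>x::real. 1 / x) \<in> borel_measurable L01"
    by (intro measurable_restrict_space1 borel_measurable_divide borel_measurable_const
        id_borel_measurable_lebesgue[unfolded id_def])
  have "AE x in L01. norm (1 / x) \<le> norm (h x / D)"
    using le h(2) AE_L01_pos
  proof eventually_elim
    case (elim x)
    then have "D * (1 / x) \<le> \<bar>h x\<bar>"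
      by simp
    with elim(3) \<open>D > 0\<close> show ?case
      by (simp add: field_simps)
  qed
  with meas have "integrable L01 (\<lambda>x. 1 / x)"
    by (rule Bochner_Integration.integrable_bound[OF integrable_divide_zero[OF h(1)]])
  with not_integrable_inverse show False ..
qed

section \<open>Linear independence\<close>

lemma lincomb_image:
  assumes "inj_on f T"
  shows "lincomb c (f ` T) = (\<lambda>\<alpha> x. \<Sum>S\<in>T. c (f S) * f S \<alpha> x)"
  unfolding lincomb_def by (simp add: sum.reindex[OF assms])

lemma inj_if_separated:
  fixes f :: "'a \<Rightarrow> 'i \<Rightarrow> real \<Rightarrow> real"
  assumes sep: "\<And>T j. finite T \<Longrightarrow> j \<in> T \<Longrightarrow> \<exists>\<alpha> x. f j \<alpha> x \<noteq> 0 \<and> (\<forall>S\<in>T - {j}. f S \<alpha> x = 0)"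
  shows "inj f"
proof (rule injI, rule ccontr)
  fix S S' assume "f S = f S'" "S \<noteq> S'"
  moreover obtain \<alpha> x where "f S \<alpha> x \<noteq> 0" "\<forall>R\<in>{S, S'} - {S}. f R \<alpha> x = 0"
    using sep[of "{S, S'}" S] by blast
  ultimately show False
    by simp
qed

lemma lincomb_coeff_eq_0_if_separated:
  fixes f :: "'a \<Rightarrow> 'i \<Rightarrow> real \<Rightarrow> real"
  assumes sep: "\<And>T j. finite T \<Longrightarrow> j \<in> T \<Longrightarrow> \<exists>\<alpha> x. f j \<alpha> x \<noteq> 0 \<and> (\<forall>S\<in>T - {j}. f S \<alpha> x = 0)"
    and A: "finite A" "A \<subseteq> range f" "lincomb c A = (\<lambda>\<alpha> x. 0)" and "b \<in> A"
  shows "c b = 0"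
proof -
  have inj: "inj f"
    using sep by (rule inj_if_separated)
  define T where "T = f -` A"
  have T: "finite T" "A = f ` T"
    using A inj by (simp_all add: T_def finite_vimageI image_vimage_eq Int_absorb2)
  obtain j where j: "j \<in> T" "b = f j"
    using \<open>b \<in> A\<close> T(2) by blast
  then obtain \<alpha> x where x: "f j \<alpha> x \<noteq> 0" "\<forall>S\<in>T - {j}. f S \<alpha> x = 0"
    using sep[OF T(1)] by blast
  have "lincomb c A \<alpha> x = (\<Sum>S\<in>T. c (f S) * f S \<alpha> x)"
    unfolding T(2) lincomb_image[OF inj_on_subset[OF inj subset_UNIV]] ..
  also have "\<dots> = c b * b \<alpha> x"
    using x j by (simp add: sum.remove[OF T(1) j(1)])
  finally show "c b = 0"
    using A x(1) j(2) by simp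
qed

lemma lin_indep_range_if_separated:
  fixes f :: "'a \<Rightarrow> 'i \<Rightarrow> real \<Rightarrow> real"
  assumes "\<And>T j. finite T \<Longrightarrow> j \<in> T \<Longrightarrow> \<exists>\<alpha> x. f j \<alpha> x \<noteq> 0 \<and> (\<forall>S\<in>T - {j}. f S \<alpha> x = 0)"
  shows "lin_indep (range f)"
  unfolding lin_indep_def using lincomb_coeff_eq_0_if_separated[OF assms] by blast

section \<open>The basis sequences\<close>

locale add_cov_construction = null_filtration \<kappa> g + separating_null_family C P
  for \<kappa> :: "'i rel" and g :: "'i \<Rightarrow> real set" and C :: "real set" and P :: "'a \<Rightarrow> real set"
begin

definition good :: "'i \<Rightarrow> real set" where
  "good \<alpha> = {0<..1} - C - \<Union>(g ` underS \<kappa> \<alpha>)"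

definition basis :: "'a \<Rightarrow> 'i \<Rightarrow> real \<Rightarrow> real" where
  "basis S \<alpha> x = (if \<alpha> \<in> Field \<kappa> then indicator (P S) x + indicator (good \<alpha>) x / x else 0)"

lemma AE_good:
  assumes "\<alpha> \<in> Field \<kappa>"
  shows "AE x in L01. x \<in> good \<alpha>"
proof -
  have "{0} \<union> C \<union> \<Union>(g ` underS \<kappa> \<alpha>) \<in> null_sets L01"
    using initial_Union_nullN[OF assms] C_null C_unit_interval
    by (auto simp: null_sets_restrict_space nullN_def)
  then show ?thesis
    by (rule AE_I') (auto simp: good_def)
qed

lemma eventually_not_good:
  assumes "x \<in> {0..1}"
  obtains \<beta> where "\<beta> \<in> Field \<kappa>" "\<And>\<alpha>. (\<beta>, \<alpha>) \<in> \<kappa> \<Longrightarrow> \<alpha> \<noteq> \<beta> \<Longrightarrow> x \<notin> good \<alpha>"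
proof -
  obtain \<beta> where "\<beta> \<in> Field \<kappa>" "x \<in> g \<beta>"
    using assms covers_unit_interval by blast
  then show thesis
    by (intro that[of \<beta>]) (auto simp: good_def underS_def)
qed

lemma basis_on_good: "\<alpha> \<in> Field \<kappa> \<Longrightarrow> x \<in> good \<alpha> \<Longrightarrow> basis S \<alpha> x = 1 / x"
  using P_subset[of S] by (auto simp: basis_def good_def indicator_def)

lemma basis_on_C: "\<alpha> \<in> Field \<kappa> \<Longrightarrow> x \<in> C \<Longrightarrow> basis S \<alpha> x = indicator (P S) x"
  by (simp add: basis_def good_def)

lemma basis_eq_0: "x \<notin> C \<Longrightarrow> x \<notin> good \<alpha> \<Longrightarrow> basis S \<alpha> x = 0"
  using P_subset[of S] by (auto simp: basis_def indicator_def)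

lemma basis_in_seq_space: "basis S \<in> seq_space \<kappa>"
  using P_subset[of S] C_unit_interval by (auto simp: seq_space_def basis_def good_def indicator_def)

lemma P_null: "P S \<in> null_sets lebesgue"
  using C_null P_subset negligible_iff_null_sets negligible_subset by metis

lemma basis_measurable: "basis S \<alpha> \<in> borel_measurable L01"
proof (cases "\<alpha> \<in> Field \<kappa>")
  case True
  have "\<Union>(g ` underS \<kappa> \<alpha>) \<in> sets lebesgue"
    using initial_Union_nullN[OF True] unfolding nullN_def by auto
  then have "good \<alpha> \<in> sets lebesgue"
    using C_null unfolding good_def by (intro sets.Diff) auto
  with P_null have "(\<lambda>x. indicator (P S) x + indicator (good \<alpha>) x / x :: real) \<in> borel_measurable lebesgue"
    by (intro borel_measurable_add borel_measurable_divide borel_measurable_indicator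
        id_borel_measurable_lebesgue[unfolded id_def]) auto
  then show ?thesis
    using True unfolding basis_def[abs_def] by (simp add: measurable_restrict_space1)
qed (simp add: basis_def[abs_def])

lemma positive_combination_in_ANM_minus_ND:
  assumes T: "finite T" "T \<noteq> {}" and d: "\<And>S. S \<in> T \<Longrightarrow> d S > 0"
  shows "(\<lambda>\<alpha> x. \<Sum>S\<in>T. d S * basis S \<alpha> x) \<in> ANM \<kappa> - ND \<kappa>"
proof -
  define G where "G = (\<lambda>\<alpha> x. \<Sum>S\<in>T. d S * basis S \<alpha> x)"
  define D where "D = sum d T"
  have "D > 0"
    unfolding D_def using T d by (intro sum_pos) auto
  have G_measurable: "G \<alpha> \<in> borel_measurable L01" for \<alpha>
    unfolding G_def using basis_measurable by measurable
  have G_ge: "AE x in L01. D / x \<le> \<bar>G \<alpha> x\<bar>" if "\<alpha> \<in> Field \<kappa>" for \<alpha>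
    using AE_good[OF that]
  proof eventually_elim
    case (elim x)
    then have "G \<alpha> x = D / x"
      unfolding G_def D_def using basis_on_good[OF that] by (simp add: sum_divide_distrib)
    then show ?case
      by (metis abs_ge_self)
  qed
  have "AE x in L01. x \<notin> C"
    using C_null C_unit_interval by (intro AE_I'[of C]) (auto simp: null_sets_restrict_space)
  then have "kconv_ae \<kappa> G (\<lambda>x. 0)"
    unfolding kconv_ae_def
  proof (rule AE_mp[OF _ AE_I2], intro impI)
    fix x assume "x \<in> space L01" "x \<notin> C"
    then have "x \<in> {0..1}"
      by simp
    then obtain \<beta> where "\<beta> \<in> Field \<kappa>" "\<And>\<alpha>. (\<beta>, \<alpha>) \<in> \<kappa> \<Longrightarrow> \<alpha> \<noteq> \<beta> \<Longrightarrow> x \<notin> good \<alpha>"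
      using eventually_not_good by blast
    then show "kconv \<kappa> (\<lambda>\<alpha>. G \<alpha> x) 0"
      unfolding G_def using \<open>x \<notin> C\<close> by (intro kconv_if_eventually_eq) (auto simp: basis_eq_0)
  qed
  moreover have "\<not> kconv_meas \<kappa> G (\<lambda>x. 0)"
    using no_maximum \<open>D > 0\<close> G_measurable G_ge by (rule not_kconv_meas_if_inverse_le)
  moreover obtain \<alpha> where "\<alpha> \<in> Field \<kappa>"
    using Field_nonempty by blast
  then have "G \<notin> ND \<kappa>"
    using \<open>D > 0\<close> G_ge[OF \<open>\<alpha> \<in> Field \<kappa>\<close>] by (rule not_ND_if_inverse_le)
  ultimately show ?thesis
    unfolding G_def[symmetric] ANM_def using G_measurable by auto
qed

definition scaled_basis :: "real \<Rightarrow> 'a \<Rightarrow> 'i \<Rightarrow> real \<Rightarrow> real" where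
  "scaled_basis \<sigma> S = (\<lambda>\<alpha> x. \<sigma> * basis S \<alpha> x)"

lemma scaled_basis_separated:
  assumes "\<sigma> \<noteq> 0" "finite T" "j \<in> T"
  shows "\<exists>\<alpha> x. scaled_basis \<sigma> j \<alpha> x \<noteq> 0 \<and> (\<forall>S\<in>T - {j}. scaled_basis \<sigma> S \<alpha> x = 0)"
proof -
  obtain x where x: "x \<in> P j" "\<forall>S\<in>T - {j}. x \<notin> P S"
    using P_separate[OF assms(2,3)] by blast
  moreover obtain \<alpha> where "\<alpha> \<in> Field \<kappa>"
    using Field_nonempty by blast
  moreover have "x \<in> C"
    using x(1) P_subset by blast
  ultimately show ?thesis
    using assms(1) by (intro exI[of _ \<alpha>] exI[of _ x]) (auto simp: scaled_basis_def basis_on_C)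
qed

lemma inj_scaled_basis: "\<sigma> \<noteq> 0 \<Longrightarrow> inj (scaled_basis \<sigma>)"
  by (rule inj_if_separated) (rule scaled_basis_separated)

lemma lin_indep_scaled_basis: "\<sigma> \<noteq> 0 \<Longrightarrow> lin_indep (range (scaled_basis \<sigma>))"
  by (rule lin_indep_range_if_separated) (rule scaled_basis_separated)

lemma scaled_basis_in_seq_space: "scaled_basis \<sigma> S \<in> seq_space \<kappa>"
  using basis_in_seq_space[of S] by (simp add: seq_space_def scaled_basis_def)

lemma card_of_range_scaled_basis:
  assumes "\<sigma> \<noteq> 0"
  shows "(card_of (range (scaled_basis \<sigma>)), card_of (UNIV :: 'a set)) \<in> ordIso"
  using inj_on_imp_bij_betw[OF inj_scaled_basis[OF assms]] card_of_ordIso ordIso_symmetric by blast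

lemma scaled_basis_cone:
  assumes A: "finite A" "A \<noteq> {}" "A \<subseteq> range (scaled_basis \<sigma>)" and c: "\<And>b. b \<in> A \<Longrightarrow> 0 < \<sigma> * c b"
  shows "lincomb c A \<in> ANM \<kappa> - ND \<kappa>"
proof -
  have "\<sigma> \<noteq> 0"
    using A(2) c by fastforce
  define T where "T = scaled_basis \<sigma> -` A"
  have inj: "inj_on (scaled_basis \<sigma>) T"
    using inj_on_subset[OF inj_scaled_basis[OF \<open>\<sigma> \<noteq> 0\<close>] subset_UNIV] .
  have T: "finite T" "A = scaled_basis \<sigma> ` T"
    using A inj_scaled_basis[OF \<open>\<sigma> \<noteq> 0\<close>]
    by (simp_all add: T_def finite_vimageI image_vimage_eq Int_absorb2)
  have "lincomb c A = (\<lambda>\<alpha> x. \<Sum>S\<in>T. (\<sigma> * c (scaled_basis \<sigma> S)) * basis S \<alpha> x)"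
    unfolding T(2) lincomb_image[OF inj] by (simp add: scaled_basis_def mult_ac)
  also have "\<dots> \<in> ANM \<kappa> - ND \<kappa>"
    using T A(2) c by (intro positive_combination_in_ANM_minus_ND) auto
  finally show ?thesis .
qed

end

theorem mainTheorem10:
  fixes \<kappa> :: "'i rel"
  assumes "card_order_on (Field \<kappa>) \<kappa>"
    and "is_addN (Field \<kappa>)"
    and "is_covN (Field \<kappa>)"
  shows "coneable (Pow (UNIV :: real set)) \<kappa> (ANM \<kappa> - ND \<kappa>)"
proof -
  obtain g where "null_filtration \<kappa> g"
    using null_filtration_if_addN_eq_covN[OF assms] .
  moreover obtain C and P :: "real set \<Rightarrow> real set" where "separating_null_family C P"
    using exists_separating_null_family by blast
  ultimately interpret add_cov_construction \<kappa> g C P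
    by (simp add: add_cov_construction_def)
  have "(1::real) \<noteq> 0" "(-1::real) \<noteq> 0"
    by simp_all
  then show ?thesis
    unfolding coneable_def Pow_UNIV
    using scaled_basis_in_seq_space lin_indep_scaled_basis card_of_range_scaled_basis
      scaled_basis_cone[of _ 1] scaled_basis_cone[of _ "-1"]
    by (intro exI[of _ "range (scaled_basis 1)"] exI[of _ "range (scaled_basis (-1))"]) auto
qed

end
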